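(* Let $\mathrm{Cir}_9$ be the graph with vertex set $\{1,\dots,9\}$ whose maximal stable sets are exactly $\{1,2,3\},\{4,5,6\},\{7,8,9\},\{1,4,7\},\{3,6,9\}$ (so two distinct vertices are non-adjacent iff they lie together in one of these sets). Then $\mathrm{Cir}_9$ is not co-weakly triangle, i.e., the complement of $\mathrm{Cir}_9$ is not weakly triangle.
   Context: A family $\mathcal S$ of maximal stable sets of $G$ is non-edge covering if every two distinct non-adjacent vertices lie in a common member. A graph $G$ is weakly triangle if there is a non-edge covering family $\mathcal S$ of maximal stable sets of $G$ such that for every $S\in\mathcal S$ and every pair of adjacent vertices $u,v\in V(G)\setminus S$, $u$ and $v$ have a common neighbor in $S$. *)

theory Defs
  imports Main
begin

text \<open>A finite simple graph is given by a vertex set V and a symmetric,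
irreflexive adjacency relation E (only its restriction to V matters).\<close>

definition stable_set :: "'a set \<Rightarrow> ('a \<Rightarrow> 'a \<Rightarrow> bool) \<Rightarrow> 'a set \<Rightarrow> bool" where
  "stable_set V E S \<longleftrightarrow> S \<subseteq> V \<and> (\<forall>u\<in>S. \<forall>v\<in>S. \<not> E u v)"

definition maximal_stable_set :: "'a set \<Rightarrow> ('a \<Rightarrow> 'a \<Rightarrow> bool) \<Rightarrow> 'a set \<Rightarrow> bool" where
  "maximal_stable_set V E S \<longleftrightarrow>
     stable_set V E S \<and> (\<forall>T. stable_set V E T \<and> S \<subseteq> T \<longrightarrow> T = S)"

definition non_edge_covering :: "'a set \<Rightarrow> ('a \<Rightarrow> 'a \<Rightarrow> bool) \<Rightarrow> 'a set set \<Rightarrow> bool" where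
  "non_edge_covering V E \<S> \<longleftrightarrow>
     (\<forall>S\<in>\<S>. maximal_stable_set V E S) \<and>
     (\<forall>u\<in>V. \<forall>v\<in>V. u \<noteq> v \<and> \<not> E u v \<longrightarrow> (\<exists>S\<in>\<S>. u \<in> S \<and> v \<in> S))"

definition weakly_triangle :: "'a set \<Rightarrow> ('a \<Rightarrow> 'a \<Rightarrow> bool) \<Rightarrow> bool" where
  "weakly_triangle V E \<longleftrightarrow>
     (\<exists>\<S>. non_edge_covering V E \<S> \<and>
        (\<forall>S\<in>\<S>. \<forall>u\<in>V - S. \<forall>v\<in>V - S. E u v \<longrightarrow> (\<exists>w\<in>S. E u w \<and> E v w)))"

definition complement_graph :: "('a \<Rightarrow> 'a \<Rightarrow> bool) \<Rightarrow> 'a \<Rightarrow> 'a \<Rightarrow> bool" where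
  "complement_graph E u v \<longleftrightarrow> u \<noteq> v \<and> \<not> E u v"

definition Cir9_V :: "nat set" where
  "Cir9_V = {1..9}"

definition Cir9_blocks :: "nat set set" where
  "Cir9_blocks = {{1,2,3}, {4,5,6}, {7,8,9}, {1,4,7}, {3,6,9}}"

definition Cir9_E :: "nat \<Rightarrow> nat \<Rightarrow> bool" where
  "Cir9_E u v \<longleftrightarrow> u \<noteq> v \<and> \<not> (\<exists>B\<in>Cir9_blocks. u \<in> B \<and> v \<in> B)"

end

theory Submission
  imports Defs
begin

text \<open>In the complement \<open>H\<close> of \<open>Cir\<^sub>9\<close> two vertices are adjacent iff they share a block.
The non-adjacent pair 2, 5 lies in some stable member \<open>S\<close> of the family, which therefore
misses their neighbours 1, 3, 4, 6. The edges 14 and 36 of \<open>H - S\<close> need common neighbours in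
\<open>S\<close>, and these are unique: 7 and 9 respectively. But 7 and 9 are adjacent in \<open>H\<close>.\<close>

lemma stable_set_adjacent_not_mem:
  assumes "stable_set V E S" "x \<in> S" "E x y"
  shows "y \<notin> S"
  using assms unfolding stable_set_def by blast

lemma weakly_triangle_obtain_stable_set:
  assumes "weakly_triangle V E" "u \<in> V" "v \<in> V" "u \<noteq> v" "\<not> E u v"
  obtains S where "stable_set V E S" "u \<in> S" "v \<in> S"
    and "\<And>x y. x \<in> V - S \<Longrightarrow> y \<in> V - S \<Longrightarrow> E x y \<Longrightarrow> \<exists>w\<in>S. E x w \<and> E y w"
proof -
  obtain \<S> where cover: "non_edge_covering V E \<S>"
    and triangle: "\<forall>S\<in>\<S>. \<forall>x\<in>V - S. \<forall>y\<in>V - S. E x y \<longrightarrow> (\<exists>w\<in>S. E x w \<and> E y w)"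
    using assms(1) unfolding weakly_triangle_def by blast
  then obtain S where "S \<in> \<S>" "u \<in> S" "v \<in> S"
    using assms(2-5) unfolding non_edge_covering_def by blast
  moreover have "stable_set V E S"
    using cover \<open>S \<in> \<S>\<close> unfolding non_edge_covering_def maximal_stable_set_def by blast
  ultimately show thesis
    using that triangle by blast
qed

lemma Cir9_complement_adj:
  "complement_graph Cir9_E u v \<longleftrightarrow> u \<noteq> v \<and> (\<exists>B\<in>Cir9_blocks. u \<in> B \<and> v \<in> B)"
  unfolding complement_graph_def Cir9_E_def by auto

lemma Cir9_complement_common_neighbour_1_4:
  "complement_graph Cir9_E 1 w \<and> complement_graph Cir9_E 4 w \<longleftrightarrow> w = 7"
  unfolding Cir9_complement_adj Cir9_blocks_def by auto

lemma Cir9_complement_common_neighbour_3_6: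
  "complement_graph Cir9_E 3 w \<and> complement_graph Cir9_E 6 w \<longleftrightarrow> w = 9"
  unfolding Cir9_complement_adj Cir9_blocks_def by auto

theorem proposition43:
  shows "\<not> weakly_triangle Cir9_V (complement_graph Cir9_E)"
proof
  let ?H = "complement_graph Cir9_E"
  have adj: "?H 2 1" "?H 2 3" "?H 5 4" "?H 5 6" "?H 1 4" "?H 3 6" "?H 7 9"
    and non_adj: "\<not> ?H 2 5"
    by (simp_all add: Cir9_complement_adj Cir9_blocks_def)
  assume "weakly_triangle Cir9_V ?H"
  then obtain S where stable: "stable_set Cir9_V ?H S" and "2 \<in> S" "5 \<in> S"
    and triangle: "\<And>x y. x \<in> Cir9_V - S \<Longrightarrow> y \<in> Cir9_V - S \<Longrightarrow> ?H x y \<Longrightarrow>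
                     \<exists>w\<in>S. ?H x w \<and> ?H y w"
    by (rule weakly_triangle_obtain_stable_set[where u = 2 and v = 5])
       (use non_adj in \<open>simp_all add: Cir9_V_def\<close>)
  have outside: "1 \<in> Cir9_V - S" "3 \<in> Cir9_V - S" "4 \<in> Cir9_V - S" "6 \<in> Cir9_V - S"
    using stable_set_adjacent_not_mem[OF stable] \<open>2 \<in> S\<close> \<open>5 \<in> S\<close> adj(1-4)
    by (simp_all add: Cir9_V_def)
  have "7 \<in> S"
    using triangle[OF outside(1,3) adj(5)] Cir9_complement_common_neighbour_1_4 by auto
  moreover have "9 \<in> S"
    using triangle[OF outside(2,4) adj(6)] Cir9_complement_common_neighbour_3_6 by auto
  ultimately show False
    using stable_set_adjacent_not_mem[OF stable _ adj(7)] by blast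
qed

end
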